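(* Let $\{w_t\}$, $\{z_t\}$, $\{v_t\}$, $\{\hat D_t\}$ be generated by {\tt Scaled L-SVRG} with step-size $\eta>0$ and probability $p\in(0,1]$. Then for every $t\ge0$ and every $B>0$, $$\mathbb{E}_t\left[\|w_{t+1}-z_{t+1}\|^2\right]\le\frac{\eta^2}{\alpha}\mathbb{E}_t\left[\|v_t\|^2_{\hat D_t^{-1}}\right]+(1-p)(1+\eta B)\|w_t-z_t\|^2+(1-p)\frac{\eta}{\alpha B}\|\nabla P(w_t)\|^2_{\hat D_t^{-1}}.$$
   Context: $P=\frac1n\sum_{i=1}^nf_i$ with twice differentiable $f_i:\mathbb{R}^d\to\mathbb{R}$. $\|x\|_D^2=x^TDx$. For $J\subseteq[n]$, $\nabla^2P_J(w)=\frac1{|J|}\sum_{j\in J}\nabla^2 f_j(w)$; $\odot$ is the Hadamard product; $\mathrm{diag}(x)$ is the diagonal matrix with the entries of $x$. Preconditioner (parameters $\alpha>0$, $\beta\in(0,1)$, $m\ge1$): $D_0=\frac1m\sum_{j=1}^m\mathrm{diag}(z'_j\odot\nabla^2P_{\mathcal{J}_j}(w_0)z'_j)$, $D_t=\beta D_{t-1}+(1-\beta)\mathrm{diag}(z'_t\odot\nabla^2P_{\mathcal{J}_t}(w_t)z'_t)$ for $t\ge1$, with independent Rademacher vectors $z'$ and random index sets $\mathcal{J}\subseteq[n]$, independent of the gradient samples; $\hat D_t$ diagonal with $(\hat D_t)_{ii}=\max\{\alpha,|(D_t)_{ii}|\}$. {\tt Scaled L-SVRG}: $z_0=w_0$,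 $v_0=\nabla P(w_0)$; for $t\ge0$: $w_{t+1}=w_t-\eta\hat D_t^{-1}v_t$; $z_{t+1}=w_t$ with probability $p$ and $z_{t+1}=z_t$ with probability $1-p$; draw $i_{t+1}$ uniformly from $[n]$ independently; $v_{t+1}=\nabla f_{i_{t+1}}(w_{t+1})-\nabla f_{i_{t+1}}(z_{t+1})+\nabla P(z_{t+1})$; update $\hat D_{t+1}$. $\mathbb{E}_t$ denotes conditional expectation given $w_t$, $z_t$ and $\hat D_t$ (the remaining randomness being the index used in $v_t$ and the coin flip defining $z_{t+1}$). *)

theory Defs
  imports "HOL-Analysis.Analysis" "HOL-Probability.Probability"
begin

definition diag_mat :: "real^'n \<Rightarrow> real^'n^'n" where
  "diag_mat x = (\<chi> i j. if i = j then x $ i else 0)"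

definition Dnorm_sq :: "real^'n^'n \<Rightarrow> real^'n \<Rightarrow> real" where
  "Dnorm_sq D x = x \<bullet> (D *v x)"

text \<open>Clipped preconditioner: (Dhat)_ii = max alpha |D_ii|, D given by its diagonal d.\<close>
definition Dhat :: "real \<Rightarrow> real^'n \<Rightarrow> real^'n^'n" where
  "Dhat \<alpha> d = diag_mat (\<chi> i. max \<alpha> \<bar>d $ i\<bar>)"

end

theory Submission
  imports Defs
begin

(* With probability p the snapshot moves to w and only the step eta Di v is left; otherwise
   expanding |(w - z) - eta Di v|^2 produces the cross term -2 eta <w - z, Di v>, whose mean over
   the index is -2 eta <w - z, Di grad P(w)> because v is an unbiased estimate of grad P(w).
   Young's inequality splits it into eta B |w - z|^2 + (eta / B) |Di grad P(w)|^2, and every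
   squared step is converted to the Di-norm by |Di x|^2 <= (1 / alpha) x^T Di x, which holds
   since Di is diagonal with entries in (0, 1 / alpha]. *)

lemma matrix_inv_unique:
  fixes A B :: "'a::semiring_1^'n^'n"
  assumes "A ** B = mat 1" "B ** A = mat 1"
  shows "matrix_inv A = B"
proof -
  let ?C = "matrix_inv A"
  have C: "A ** ?C = mat 1"
    unfolding matrix_inv_def by (rule someI2[where a = B]) (use assms in auto)
  have "?C = (B ** A) ** ?C" using assms by (simp add: matrix_mul_lid)
  also have "\<dots> = B ** (A ** ?C)" by (simp add: matrix_mul_assoc)
  also have "\<dots> = B" using C by (simp add: matrix_mul_rid)
  finally show ?thesis .
qed

lemma if_zero_times: "(if c then u else 0) * v = (if c then u * v else (0::'a::mult_zero))"
  by simp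

lemma diag_mat_mult_vec: "diag_mat a *v x = a * x"
  by (simp add: diag_mat_def matrix_vector_mult_def vec_eq_iff if_zero_times)

lemma diag_mat_mult: "diag_mat a ** diag_mat b = diag_mat (a * b)"
  by (simp add: diag_mat_def matrix_matrix_mult_def vec_eq_iff if_zero_times)

lemma matrix_inv_diag_mat:
  assumes "\<And>i. a $ i \<noteq> 0"
  shows "matrix_inv (diag_mat a) = diag_mat (\<chi> i. inverse (a $ i))"
proof -
  have "a * (\<chi> i. inverse (a $ i)) = 1"
    using assms by (simp add: vec_eq_iff)
  moreover have "diag_mat (1 :: real^'n) = mat 1"
    by (simp add: diag_mat_def mat_def vec_eq_iff)
  ultimately show ?thesis
    by (intro matrix_inv_unique) (simp_all add: diag_mat_mult mult.commute)
qed

lemma Dnorm_sq_diag_mat: "Dnorm_sq (diag_mat c) x = (\<Sum>j\<in>UNIV. c $ j * (x $ j)\<^sup>2)"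
  by (simp add: Dnorm_sq_def diag_mat_mult_vec inner_vec_def power2_eq_square ac_simps)

lemma norm_diag_mat_mult_vec_le:
  assumes "\<And>j. 0 \<le> c $ j" "\<And>j. c $ j \<le> K"
  shows "(norm (diag_mat c *v x))\<^sup>2 \<le> K * Dnorm_sq (diag_mat c) x"
proof -
  have "(norm (diag_mat c *v x))\<^sup>2 = (\<Sum>j\<in>UNIV. c $ j * (c $ j * (x $ j)\<^sup>2))"
    unfolding power2_norm_eq_inner by (simp add: inner_vec_def diag_mat_mult_vec power2_eq_square ac_simps)
  also have "\<dots> \<le> (\<Sum>j\<in>UNIV. K * (c $ j * (x $ j)\<^sup>2))"
    using assms by (intro sum_mono mult_right_mono) auto
  also have "\<dots> = K * Dnorm_sq (diag_mat c) x"
    by (simp add: Dnorm_sq_diag_mat sum_distrib_left)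
  finally show ?thesis .
qed

lemma neg_inner_le_young:
  fixes x y :: "'a::real_inner"
  assumes "B > 0"
  shows "- 2 * (x \<bullet> y) \<le> B * (norm x)\<^sup>2 + (norm y)\<^sup>2 / B"
proof -
  have "0 \<le> (norm (B *\<^sub>R x + y))\<^sup>2 / B" using assms by simp
  also have "(norm (B *\<^sub>R x + y))\<^sup>2 / B = B * (norm x)\<^sup>2 + 2 * (x \<bullet> y) + (norm y)\<^sup>2 / B"
    using assms unfolding power2_norm_eq_inner
    by (simp add: inner_add inner_commute field_simps power2_eq_square)
  finally have "0 \<le> B * (norm x)\<^sup>2 + 2 * (x \<bullet> y) + (norm y)\<^sup>2 / B" .
  then show ?thesis by linarith
qed

lemma gradient_of_average:
  fixes f :: "nat \<Rightarrow> 'a::real_inner \<Rightarrow> real"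
  assumes grad_f: "\<And>i x. i < n \<Longrightarrow> (f i has_derivative (\<lambda>h. g i x \<bullet> h)) (at x)"
    and grad_P: "((\<lambda>y. (\<Sum>i<n. f i y) / real n) has_derivative (\<lambda>h. gP \<bullet> h)) (at x)"
  shows "gP = (1 / real n) *\<^sub>R (\<Sum>i<n. g i x)"
proof -
  let ?q = "(1 / real n) *\<^sub>R (\<Sum>i<n. g i x)"
  have "((\<lambda>y. (\<Sum>i<n. f i y) / real n) has_derivative (\<lambda>h. (\<Sum>i<n. g i x \<bullet> h) / real n)) (at x)"
    using grad_f by (intro bounded_linear.has_derivative[OF bounded_linear_divide] has_derivative_sum) simp
  then have "((\<lambda>y. (\<Sum>i<n. f i y) / real n) has_derivative (\<lambda>h. ?q \<bullet> h)) (at x)"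
    by (simp add: inner_sum_left)
  then have "(\<lambda>h. gP \<bullet> h) = (\<lambda>h. ?q \<bullet> h)"
    using grad_P by (rule has_derivative_unique[rotated])
  then have "(gP - ?q) \<bullet> (gP - ?q) = 0"
    by (metis inner_diff_left right_minus_eq)
  then show ?thesis by simp
qed

lemma expectation_uniform_times_bernoulli:
  fixes h :: "nat \<times> bool \<Rightarrow> real"
  assumes "n \<ge> 1" "0 \<le> p" "p \<le> 1"
  shows "measure_pmf.expectation (pair_pmf (pmf_of_set {..<n}) (bernoulli_pmf p)) h
     = (\<Sum>i<n. p * h (i, True) + (1 - p) * h (i, False)) / real n"
proof -
  have ne: "{..<n} \<noteq> {}" using assms by (simp add: lessThan_empty_iff)
  let ?M = "pair_pmf (pmf_of_set {..<n}) (bernoulli_pmf p)"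
  have "measure_pmf.expectation ?M h = (\<Sum>a\<in>{..<n} \<times> UNIV. h a * pmf ?M a)"
    by (rule integral_measure_pmf_real) (use ne in \<open>auto simp: set_pair_pmf\<close>)
  also have "\<dots> = (\<Sum>i<n. (p * h (i, True) + (1 - p) * h (i, False)) / real n)"
    using ne assms by (simp add: sum.cartesian_product' pmf_pair UNIV_bool field_simps)
  finally show ?thesis by (simp add: sum_divide_distrib)
qed

lemma expectation_sq_dist_to_snapshot:
  fixes u :: "nat \<Rightarrow> 'a::real_inner"
  assumes "n \<ge> 1" "0 \<le> p" "p \<le> 1"
  shows "measure_pmf.expectation (pair_pmf (pmf_of_set {..<n}) (bernoulli_pmf p))
      (\<lambda>(i, b). (norm (w - \<eta> *\<^sub>R u i - (if b then w else z)))\<^sup>2)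
    = \<eta>\<^sup>2 * ((\<Sum>i<n. (norm (u i))\<^sup>2) / real n) + (1 - p) * (norm (w - z))\<^sup>2
      - 2 * (1 - p) * \<eta> * ((w - z) \<bullet> ((1 / real n) *\<^sub>R (\<Sum>i<n. u i)))"
proof -
  have step: "p * (norm (w - \<eta> *\<^sub>R u i - w))\<^sup>2 + (1 - p) * (norm (w - \<eta> *\<^sub>R u i - z))\<^sup>2
      = \<eta>\<^sup>2 * (norm (u i))\<^sup>2 + (1 - p) * (norm (w - z))\<^sup>2 - 2 * (1 - p) * \<eta> * ((w - z) \<bullet> u i)"
    for i
  proof -
    have stay: "(norm (w - \<eta> *\<^sub>R u i - w))\<^sup>2 = \<eta>\<^sup>2 * (norm (u i))\<^sup>2"
      by (simp add: power_mult_distrib)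
    have move: "(norm (w - \<eta> *\<^sub>R u i - z))\<^sup>2
        = (norm (w - z))\<^sup>2 - 2 * \<eta> * ((w - z) \<bullet> u i) + \<eta>\<^sup>2 * (norm (u i))\<^sup>2"
      unfolding power2_norm_eq_inner
      by (simp add: inner_diff_left inner_diff_right inner_commute algebra_simps power2_eq_square)
    show ?thesis unfolding stay move by (simp add: algebra_simps)
  qed
  have "measure_pmf.expectation (pair_pmf (pmf_of_set {..<n}) (bernoulli_pmf p))
      (\<lambda>(i, b). (norm (w - \<eta> *\<^sub>R u i - (if b then w else z)))\<^sup>2)
    = (\<Sum>i<n. \<eta>\<^sup>2 * (norm (u i))\<^sup>2 + (1 - p) * (norm (w - z))\<^sup>2
        - 2 * (1 - p) * \<eta> * ((w - z) \<bullet> u i)) / real n"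
    by (simp only: expectation_uniform_times_bernoulli[OF assms] prod.case if_True if_False step)
  also have "\<dots> = \<eta>\<^sup>2 * ((\<Sum>i<n. (norm (u i))\<^sup>2) / real n) + (1 - p) * (norm (w - z))\<^sup>2
      - 2 * (1 - p) * \<eta> * ((w - z) \<bullet> ((1 / real n) *\<^sub>R (\<Sum>i<n. u i)))"
    using assms by (simp add: sum.distrib sum_subtractf sum_distrib_left[symmetric]
        inner_sum_right[symmetric] field_simps)
  finally show ?thesis .
qed

lemma neg_inner_diag_mat_le:
  assumes "B > 0" "\<And>j. 0 \<le> c $ j" "\<And>j. c $ j \<le> K"
  shows "- 2 * (x \<bullet> (diag_mat c *v y)) \<le> B * (norm x)\<^sup>2 + K / B * Dnorm_sq (diag_mat c) y"
proof -
  have "- 2 * (x \<bullet> (diag_mat c *v y)) \<le> B * (norm x)\<^sup>2 + (norm (diag_mat c *v y))\<^sup>2 / B"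
    using assms(1) by (rule neg_inner_le_young)
  also have "(norm (diag_mat c *v y))\<^sup>2 / B \<le> K * Dnorm_sq (diag_mat c) y / B"
    using assms by (intro divide_right_mono norm_diag_mat_mult_vec_le) auto
  finally show ?thesis by simp
qed

lemma expectation_sq_dist_diag_step_le:
  fixes v :: "nat \<Rightarrow> real^'n"
  assumes n: "n \<ge> 1" and p: "0 \<le> p" "p \<le> 1" and eta: "\<eta> \<ge> 0" and B: "B > 0"
    and c: "\<And>j. 0 \<le> c $ j" "\<And>j. c $ j \<le> 1 / \<alpha>"
    and mean: "(1 / real n) *\<^sub>R (\<Sum>i<n. v i) = G"
  defines "M \<equiv> pair_pmf (pmf_of_set {..<n}) (bernoulli_pmf p)"
  shows "measure_pmf.expectation M
      (\<lambda>(i, b). (norm (w - \<eta> *\<^sub>R (diag_mat c *v v i) - (if b then w else z)))\<^sup>2)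
    \<le> \<eta>\<^sup>2 / \<alpha> * measure_pmf.expectation M (\<lambda>(i, b). Dnorm_sq (diag_mat c) (v i))
      + (1 - p) * (1 + \<eta> * B) * (norm (w - z))\<^sup>2
      + (1 - p) * (\<eta> / (\<alpha> * B)) * Dnorm_sq (diag_mat c) G"
proof -
  define u where "u i = diag_mat c *v v i" for i
  have mean_u: "(1 / real n) *\<^sub>R (\<Sum>i<n. u i) = diag_mat c *v G"
    using mean by (simp add: u_def diag_mat_mult_vec flip: sum_distrib_left mult_scaleR_right)
  have sum_sq: "(\<Sum>i<n. (norm (u i))\<^sup>2) \<le> (\<Sum>i<n. 1 / \<alpha> * Dnorm_sq (diag_mat c) (v i))"
    unfolding u_def using c by (intro sum_mono norm_diag_mat_mult_vec_le)
  have "(\<Sum>i<n. (norm (u i))\<^sup>2) / real n \<le> 1 / \<alpha> * ((\<Sum>i<n. Dnorm_sq (diag_mat c) (v i)) / real n)"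
    using divide_right_mono[OF sum_sq, of "real n"] by (simp flip: sum_divide_distrib)
  also have "(\<Sum>i<n. Dnorm_sq (diag_mat c) (v i)) / real n
      = measure_pmf.expectation M (\<lambda>(i, b). Dnorm_sq (diag_mat c) (v i))"
    using n p by (simp add: M_def expectation_uniform_times_bernoulli algebra_simps)
  finally have variance: "(\<Sum>i<n. (norm (u i))\<^sup>2) / real n
      \<le> 1 / \<alpha> * measure_pmf.expectation M (\<lambda>(i, b). Dnorm_sq (diag_mat c) (v i))" .
  have cross: "- 2 * ((w - z) \<bullet> (diag_mat c *v G))
      \<le> B * (norm (w - z))\<^sup>2 + 1 / \<alpha> / B * Dnorm_sq (diag_mat c) G"
    using B c by (rule neg_inner_diag_mat_le)
  have "measure_pmf.expectation M
      (\<lambda>(i, b). (norm (w - \<eta> *\<^sub>R u i - (if b then w else z)))\<^sup>2)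
    = \<eta>\<^sup>2 * ((\<Sum>i<n. (norm (u i))\<^sup>2) / real n) + (1 - p) * (norm (w - z))\<^sup>2
      + (1 - p) * \<eta> * (- 2 * ((w - z) \<bullet> (diag_mat c *v G)))"
    using n p by (simp add: M_def expectation_sq_dist_to_snapshot mean_u)
  also have "\<dots> \<le> \<eta>\<^sup>2 * (1 / \<alpha> * measure_pmf.expectation M (\<lambda>(i, b). Dnorm_sq (diag_mat c) (v i)))
      + (1 - p) * (norm (w - z))\<^sup>2
      + (1 - p) * \<eta> * (B * (norm (w - z))\<^sup>2 + 1 / \<alpha> / B * Dnorm_sq (diag_mat c) G)"
    using variance cross p eta by (intro add_mono mult_left_mono) auto
  finally show ?thesis by (simp add: u_def algebra_simps)
qed

theorem lemma5:
  fixes f :: "nat \<Rightarrow> real^'d \<Rightarrow> real"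
    and g :: "nat \<Rightarrow> real^'d \<Rightarrow> real^'d"
    and gP :: "real^'d \<Rightarrow> real^'d"
    and n :: nat and \<alpha> \<eta> p B :: real
    and w z d :: "real^'d"
  assumes n: "n \<ge> 1"
    and grad_f: "\<forall>i<n. \<forall>x. (f i has_derivative (\<lambda>h. g i x \<bullet> h)) (at x)"
    and twice: "\<forall>i<n. \<forall>x. g i differentiable (at x)"
    and grad_P: "\<forall>x. ((\<lambda>y. (\<Sum>i<n. f i y) / real n) has_derivative (\<lambda>h. gP x \<bullet> h)) (at x)"
    and alpha: "\<alpha> > 0" and eta: "\<eta> > 0" and p: "0 < p" "p \<le> 1" and B: "B > 0"
  shows
    "let Dh = Dhat \<alpha> d;
         Di = matrix_inv Dh;
         v = (\<lambda>i. g i w - g i z + gP z);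
         w' = (\<lambda>i. w - \<eta> *\<^sub>R (Di *v v i));
         M = pair_pmf (pmf_of_set {..<n}) (bernoulli_pmf p)
     in measure_pmf.expectation M (\<lambda>(i, b). (norm (w' i - (if b then w else z)))\<^sup>2)
        \<le> \<eta>\<^sup>2 / \<alpha> * measure_pmf.expectation M (\<lambda>(i, b). Dnorm_sq Di (v i))
          + (1 - p) * (1 + \<eta> * B) * (norm (w - z))\<^sup>2
          + (1 - p) * (\<eta> / (\<alpha> * B)) * Dnorm_sq Di (gP w)"
proof -
  define c where "c = (\<chi> j. inverse (max \<alpha> \<bar>d $ j\<bar>))"
  have c_nonneg: "0 \<le> c $ j" and c_le: "c $ j \<le> 1 / \<alpha>" for j
    using alpha by (simp_all add: c_def divide_inverse le_imp_inverse_le)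
  have Di: "matrix_inv (Dhat \<alpha> d) = diag_mat c"
    unfolding Dhat_def c_def using alpha by (subst matrix_inv_diag_mat) auto
  have mean_g: "(1 / real n) *\<^sub>R (\<Sum>i<n. g i x) = gP x" for x
    using gradient_of_average[OF _ grad_P[rule_format]] grad_f by (metis (no_types))
  have "(1 / real n) *\<^sub>R (\<Sum>i<n. g i w - g i z + gP z) = gP w"
    using n mean_g[of w] mean_g[of z]
    by (simp add: sum.distrib sum_subtractf scaleR_diff_right scaleR_add_right
        sum_constant_scaleR del: sum_constant)
  from expectation_sq_dist_diag_step_le[OF n _ p(2) _ B c_nonneg c_le this, of \<eta> w z]
  show ?thesis
    unfolding Let_def Di using p eta by simp
qed

end
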